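(* Let $G$ be a finite simple graph of order $p$ and size $q$ with $p\geq 4$ and $q\geq p+1$. Then $G$ contains either a cycle of even length or two edge-disjoint cycles of odd length. *)

theory Defs
  imports Main
begin

definition simple_graph :: "'a set \<Rightarrow> 'a set set \<Rightarrow> bool" where
  "simple_graph V E \<longleftrightarrow> finite V \<and>
     (\<forall>e\<in>E. \<exists>u v. u \<in> V \<and> v \<in> V \<and> u \<noteq> v \<and> e = {u, v})"

definition is_cycle :: "'a set \<Rightarrow> 'a set set \<Rightarrow> 'a list \<Rightarrow> bool" where
  "is_cycle V E vs \<longleftrightarrow> 3 \<le> length vs \<and> distinct vs \<and> set vs \<subseteq> V \<and>
     (\<forall>i < length vs. {vs ! i, vs ! ((i + 1) mod length vs)} \<in> E)"

definition cycle_edges :: "'a list \<Rightarrow> 'a set set" where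
  "cycle_edges vs = {{vs ! i, vs ! ((i + 1) mod length vs)} | i. i < length vs}"

end

theory Submission
  imports Defs
begin

text \<open>Two cycles with different edge sets always exist: \<open>q \<ge> p\<close> already forces a cycle
  (strip vertices of degree at most one; then a longest path closes up into a cycle), and deleting
  one edge of that cycle keeps \<open>q \<ge> p\<close>. If both cycles are odd, their symmetric difference is a
  nonempty edge set of even size in which every vertex has even degree. Such a set contains a
  cycle \<open>C\<close>; if \<open>C\<close> is odd, removing its edges leaves an even-degree set of odd, hence nonzero,
  size, which contains a second cycle, edge-disjoint from \<open>C\<close>.\<close>

definition cycle_edge :: "'a list \<Rightarrow> nat \<Rightarrow> 'a set" where
  "cycle_edge vs i = {vs ! i, vs ! ((i + 1) mod length vs)}"

lemma cycle_edges_eq_image: "cycle_edges vs = cycle_edge vs ` {..<length vs}"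
  unfolding cycle_edges_def cycle_edge_def by auto

definition cycle_in :: "'a set set \<Rightarrow> 'a list \<Rightarrow> bool" where
  "cycle_in D vs \<longleftrightarrow> 3 \<le> length vs \<and> distinct vs \<and> cycle_edges vs \<subseteq> D"

lemma cycle_in_mono: "D \<subseteq> D' \<Longrightarrow> cycle_in D vs \<Longrightarrow> cycle_in D' vs"
  unfolding cycle_in_def by blast

lemma set_subset_Union_cycle_edges: "set vs \<subseteq> \<Union>(cycle_edges vs)"
proof
  fix x assume "x \<in> set vs"
  then obtain i where "i < length vs" "x = vs ! i" by (metis in_set_conv_nth)
  then show "x \<in> \<Union>(cycle_edges vs)"
    unfolding cycle_edges_eq_image cycle_edge_def by blast
qed

lemma is_cycle_iff_cycle_in:
  assumes "\<Union>E \<subseteq> V"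
  shows "is_cycle V E vs \<longleftrightarrow> cycle_in E vs"
proof -
  have "cycle_edges vs \<subseteq> E \<Longrightarrow> set vs \<subseteq> V"
    using set_subset_Union_cycle_edges[of vs] assms by blast
  then show ?thesis
    unfolding is_cycle_def cycle_in_def cycle_edges_def by blast
qed

lemma inj_on_cycle_edge:
  assumes "3 \<le> length vs" "distinct vs"
  shows "inj_on (cycle_edge vs) {..<length vs}"
proof
  let ?n = "length vs"
  fix i j assume i: "i \<in> {..<?n}" and j: "j \<in> {..<?n}" and eq: "cycle_edge vs i = cycle_edge vs j"
  have index_eq: "vs ! k = vs ! l \<longleftrightarrow> k = l" if "k < ?n" "l < ?n" for k l
    using that assms(2) nth_eq_iff_index_eq by blast
  have succ: "(k + 1) mod ?n < ?n" for k
    using assms(1) by (intro mod_less_divisor) linarith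
  show "i = j"
  proof (rule ccontr)
    assume "i \<noteq> j"
    with eq have "i = (j + 1) mod ?n" "j = (i + 1) mod ?n"
      using i j succ unfolding cycle_edge_def doubleton_eq_iff by (auto simp: index_eq)
    then have "i mod ?n = (i + 2) mod ?n"
      using i by (simp add: mod_Suc_eq)
    then have "?n dvd 2"
      by (metis le_add1 mod_eq_dvd_iff_nat add_diff_cancel_left')
    with assms(1) show False
      using dvd_imp_le[of ?n 2] by linarith
  qed
qed

lemma card_cycle_edges:
  assumes "3 \<le> length vs" "distinct vs"
  shows "card (cycle_edges vs) = length vs"
  unfolding cycle_edges_eq_image using card_image[OF inj_on_cycle_edge[OF assms]] by simp

definition incident_edges :: "'a set set \<Rightarrow> 'a \<Rightarrow> 'a set set" where
  "incident_edges D x = {e \<in> D. x \<in> e}"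

definition even_degrees :: "'a set set \<Rightarrow> bool" where
  "even_degrees D \<longleftrightarrow> (\<forall>x. even (card (incident_edges D x)))"

lemma inj_on_Suc_mod: "inj_on (\<lambda>i. (i + 1) mod n) {..<(n::nat)}"
  by (auto simp: inj_on_def mod_Suc split: if_splits)

lemma image_Suc_mod_lessThan: "0 < n \<Longrightarrow> (\<lambda>i. (i + 1) mod n) ` {..<n} = {..<(n::nat)}"
  by (intro endo_inj_surj inj_on_Suc_mod) auto

lemma card_lessThan_Suc_mod:
  assumes "0 < n"
  shows "card {i \<in> {..<n}. P ((i + 1) mod n)} = card {i \<in> {..<(n::nat)}. P i}"
proof -
  let ?succ = "\<lambda>i. (i + 1) mod n"
  have "?succ ` {i \<in> {..<n}. P (?succ i)} = {i \<in> ?succ ` {..<n}. P i}"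
    by auto
  moreover have "inj_on ?succ {i \<in> {..<n}. P (?succ i)}"
    by (rule inj_on_subset[OF inj_on_Suc_mod]) auto
  ultimately show ?thesis
    using image_Suc_mod_lessThan[OF assms] card_image by fastforce
qed

lemma even_degrees_cycle_edges:
  assumes "3 \<le> length vs" "distinct vs"
  shows "even_degrees (cycle_edges vs)"
  unfolding even_degrees_def
proof
  fix x
  let ?n = "length vs"
  define A where "A = {i \<in> {..<?n}. vs ! i = x}"
  define B where "B = {i \<in> {..<?n}. vs ! ((i + 1) mod ?n) = x}"
  have "A \<inter> B = {}"
  proof (rule equals0I)
    fix i assume "i \<in> A \<inter> B"
    then have "i < ?n" "vs ! ((i + 1) mod ?n) = vs ! i"
      unfolding A_def B_def by auto
    moreover have "i \<noteq> (i + 1) mod ?n" "(i + 1) mod ?n < ?n"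
      using \<open>i < ?n\<close> assms(1) by (auto simp: mod_Suc)
    ultimately show False
      using assms(2) nth_eq_iff_index_eq by metis
  qed
  moreover have "card B = card A"
    unfolding A_def B_def using assms(1) by (intro card_lessThan_Suc_mod) auto
  ultimately have card_A_Un_B: "card (A \<union> B) = 2 * card A"
    by (simp add: card_Un_disjoint A_def B_def)
  have "incident_edges (cycle_edges vs) x = cycle_edge vs ` (A \<union> B)"
    unfolding incident_edges_def cycle_edges_eq_image cycle_edge_def A_def B_def by auto
  moreover have "inj_on (cycle_edge vs) (A \<union> B)"
    by (rule inj_on_subset[OF inj_on_cycle_edge[OF assms]]) (auto simp: A_def B_def)
  ultimately show "even (card (incident_edges (cycle_edges vs) x))"
    using card_A_Un_B by (simp add: card_image)
qed

lemma even_card_sym_diff_iff: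
  assumes "finite A" "finite B"
  shows "even (card (sym_diff A B)) \<longleftrightarrow> even (card A + card B)"
proof -
  have "sym_diff A B = (A \<union> B) - (A \<inter> B)" by blast
  moreover have "card (A \<inter> B) \<le> card (A \<union> B)"
    using assms by (intro card_mono) auto
  moreover have "card (A \<union> B - A \<inter> B) = card (A \<union> B) - card (A \<inter> B)"
    using assms by (intro card_Diff_subset) auto
  ultimately have "card (sym_diff A B) + card (A \<inter> B) = card (A \<union> B)"
    by simp
  moreover have "card (A \<union> B) + card (A \<inter> B) = card A + card B"
    using card_Un_Int[OF assms] by simp
  ultimately have "card A + card B = card (sym_diff A B) + 2 * card (A \<inter> B)"
    by linarith
  then show ?thesis
    by simp
qed

lemma even_degrees_sym_diff:
  assumes "finite D1" "finite D2" "even_degrees D1" "even_degrees D2"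
  shows "even_degrees (sym_diff D1 D2)"
  unfolding even_degrees_def
proof
  fix x
  have "incident_edges (sym_diff D1 D2) x = sym_diff (incident_edges D1 x) (incident_edges D2 x)"
    unfolding incident_edges_def by blast
  moreover have "finite (incident_edges D1 x)" "finite (incident_edges D2 x)"
    using assms(1,2) unfolding incident_edges_def by simp_all
  ultimately show "even (card (incident_edges (sym_diff D1 D2) x))"
    using assms(3,4) by (simp add: even_card_sym_diff_iff even_degrees_def)
qed

definition is_path :: "'a set set \<Rightarrow> 'a list \<Rightarrow> bool" where
  "is_path D ps \<longleftrightarrow> distinct ps \<and> (\<forall>i. Suc i < length ps \<longrightarrow> {ps ! i, ps ! Suc i} \<in> D)"

lemma set_path_subset_Union:
  assumes "is_path D ps" "2 \<le> length ps"
  shows "set ps \<subseteq> \<Union>D"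
proof
  fix x assume "x \<in> set ps"
  then obtain k where k: "k < length ps" "x = ps ! k"
    by (metis in_set_conv_nth)
  show "x \<in> \<Union>D"
  proof (cases "Suc k < length ps")
    case True
    then show ?thesis
      using assms(1) k unfolding is_path_def by blast
  next
    case False
    then obtain j where "k = Suc j"
      using k(1) assms(2) by (cases k) auto
    then have "{ps ! j, ps ! k} \<in> D"
      using assms(1) k(1) unfolding is_path_def by blast
    then show ?thesis
      using k(2) by blast
  qed
qed

lemma is_path_Cons:
  assumes "is_path D ps" "ps \<noteq> []" "y \<notin> set ps" "{y, hd ps} \<in> D"
  shows "is_path D (y # ps)"
  unfolding is_path_def
proof (intro conjI allI impI)
  show "distinct (y # ps)"
    using assms(1,3) unfolding is_path_def by simp
  fix i assume i: "Suc i < length (y # ps)"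
  show "{(y # ps) ! i, (y # ps) ! Suc i} \<in> D"
  proof (cases i)
    case 0
    then show ?thesis
      using assms(2,4) by (simp add: hd_conv_nth)
  next
    case (Suc k)
    then show ?thesis
      using assms(1) i unfolding is_path_def by simp
  qed
qed

lemma cycle_in_take_path:
  assumes "is_path D ps" "2 \<le> j" "j < length ps" "{ps ! j, ps ! 0} \<in> D"
  shows "cycle_in D (take (Suc j) ps)"
proof -
  let ?vs = "take (Suc j) ps"
  have len: "length ?vs = Suc j"
    using assms(3) by simp
  have "cycle_edge ?vs i \<in> D" if "i < Suc j" for i
  proof (cases "i < j")
    case True
    then have "cycle_edge ?vs i = {ps ! i, ps ! Suc i}"
      unfolding cycle_edge_def len by simp
    then show ?thesis
      using assms(1,3) True unfolding is_path_def by simp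
  next
    case False
    then have "i = j"
      using that by simp
    then have "cycle_edge ?vs i = {ps ! j, ps ! 0}"
      unfolding cycle_edge_def len by simp
    then show ?thesis
      using assms(4) by simp
  qed
  then show ?thesis
    using assms(1,2) len unfolding cycle_in_def cycle_edges_eq_image is_path_def by auto
qed

lemma exists_other_neighbour:
  assumes "\<forall>e\<in>D. card e = 2" "2 \<le> card (incident_edges D x)" "{x, z} \<in> D"
  shows "\<exists>y. {x, y} \<in> D \<and> y \<noteq> x \<and> y \<noteq> z"
proof -
  have "card {{x, z}} < card (incident_edges D x)"
    using assms(2) by simp
  then have "\<not> incident_edges D x \<subseteq> {{x, z}}"
    by (meson card_mono finite.emptyI finite.insertI leD)
  then obtain e where e: "e \<in> D" "x \<in> e" "e \<noteq> {x, z}"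
    unfolding incident_edges_def by blast
  moreover obtain a b where "e = {a, b}" "a \<noteq> b"
    using assms(1) e(1) card_2_iff by metis
  ultimately show ?thesis
    by (metis insert_commute insertE singletonD)
qed

lemma finite_Union_card_2:
  assumes "finite D" "\<forall>e\<in>D. card e = 2"
  shows "finite (\<Union>D)"
  using assms by (metis card.infinite finite_Union zero_neq_numeral)

lemma cycle_in_if_min_degree_two:
  assumes "finite D" "\<forall>e\<in>D. card e = 2" "D \<noteq> {}"
    and min_degree: "\<forall>x\<in>\<Union>D. 2 \<le> card (incident_edges D x)"
  shows "\<exists>vs. cycle_in D vs"
proof -
  let ?long_path = "\<lambda>ps. is_path D ps \<and> 2 \<le> length ps"
  obtain u v where "{u, v} \<in> D" "u \<noteq> v"
    using assms(2,3) card_2_iff by (metis all_not_in_conv)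
  then have "?long_path [u, v]"
    unfolding is_path_def by simp
  moreover have "length ps < Suc (card (\<Union>D))" if "?long_path ps" for ps
    using that set_path_subset_Union finite_Union_card_2[OF assms(1,2)]
    by (metis card_mono distinct_card is_path_def less_Suc_eq_le)
  ultimately obtain ps where ps: "?long_path ps"
    and longest: "\<And>qs. ?long_path qs \<Longrightarrow> length qs \<le> length ps"
    using ex_has_greatest_nat[of ?long_path "[u, v]" length] by blast
  then obtain x0 x1 rest where ps_eq: "ps = x0 # x1 # rest"
    by (metis Suc_le_length_iff numeral_2_eq_2)
  then have "{x0, x1} \<in> D"
    using ps unfolding is_path_def by force
  then obtain y where y: "{x0, y} \<in> D" "y \<noteq> x0" "y \<noteq> x1"
    using exists_other_neighbour[OF assms(2)] min_degree by blast
  have "y \<in> set ps"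
  proof (rule ccontr)
    assume "y \<notin> set ps"
    then have "?long_path (y # ps)"
      using is_path_Cons[of D ps y] ps y(1) ps_eq by (simp add: insert_commute)
    then show False
      using longest by fastforce
  qed
  then obtain j where j: "j < length ps" "ps ! j = y"
    by (metis in_set_conv_nth)
  moreover have "j \<noteq> 0" "j \<noteq> 1"
    using j(2) y(2,3) ps_eq by (metis nth_Cons_0, metis One_nat_def nth_Cons_0 nth_Cons_Suc)
  ultimately have "cycle_in D (take (Suc j) ps)"
    using cycle_in_take_path[of D ps j] ps y(1) ps_eq by (simp add: insert_commute)
  then show ?thesis ..
qed

lemma cycle_in_if_card_Union_le:
  assumes "finite E" "\<forall>e\<in>E. card e = 2" "card (\<Union>E) \<le> card E" "E \<noteq> {}"
  shows "\<exists>vs. cycle_in E vs"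
  using assms
proof (induction E rule: finite_psubset_induct)
  case (psubset E)
  show ?case
  proof (cases "\<forall>x\<in>\<Union>E. 2 \<le> card (incident_edges E x)")
    case True
    then show ?thesis
      using cycle_in_if_min_degree_two psubset.hyps(1) psubset.prems(1,3) by blast
  next
    case False
    then obtain v where v: "v \<in> \<Union>E" "card (incident_edges E v) \<le> 1"
      using not_le by force
    moreover have "card (incident_edges E v) \<noteq> 0"
      using v(1) psubset.hyps(1) unfolding incident_edges_def by auto
    ultimately have "card (incident_edges E v) = 1"
      by linarith
    then obtain e where e: "incident_edges E v = {e}"
      by (rule card_1_singletonE)
    let ?E' = "E - {e}"
    have "e \<in> E" "v \<in> e"
      using e unfolding incident_edges_def by auto
    have "\<Union>?E' \<subseteq> \<Union>E - {v}"
      using e unfolding incident_edges_def by blast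
    then have "card (\<Union>?E') \<le> card (\<Union>E) - 1"
      using finite_Union_card_2[OF psubset.hyps(1) psubset.prems(1)] v(1)
      by (metis card_Diff_singleton card_mono finite_Diff)
    then have card_le: "card (\<Union>?E') \<le> card ?E'"
      using psubset.prems(2) \<open>e \<in> E\<close> psubset.hyps(1) by simp
    have "?E' \<noteq> {}"
    proof
      assume "?E' = {}"
      then have "E = {e}"
        using \<open>e \<in> E\<close> by blast
      then show False
        using psubset.prems(1,2) by simp
    qed
    then obtain vs where "cycle_in ?E' vs"
      using psubset.IH[of ?E'] \<open>e \<in> E\<close> psubset.prems(1) card_le by blast
    then show ?thesis
      using cycle_in_mono[of ?E' E] by blast
  qed
qed

lemma cycle_in_if_even_degrees:
  assumes "finite D" "\<forall>e\<in>D. card e = 2" "D \<noteq> {}" "even_degrees D"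
  shows "\<exists>vs. cycle_in D vs"
proof (rule cycle_in_if_min_degree_two[OF assms(1-3)])
  show "\<forall>x\<in>\<Union>D. 2 \<le> card (incident_edges D x)"
  proof
    fix x assume "x \<in> \<Union>D"
    then have "incident_edges D x \<noteq> {}" "finite (incident_edges D x)"
      using assms(1) unfolding incident_edges_def by auto
    then have "card (incident_edges D x) \<noteq> 0"
      by simp
    moreover have "card (incident_edges D x) \<noteq> 1"
      using assms(4) unfolding even_degrees_def by (metis odd_one)
    ultimately show "2 \<le> card (incident_edges D x)"
      by linarith
  qed
qed

definition has_even_or_disjoint_odd_cycles :: "'a set set \<Rightarrow> bool" where
  "has_even_or_disjoint_odd_cycles D \<longleftrightarrow>
     (\<exists>c. cycle_in D c \<and> even (length c)) \<or>
     (\<exists>c1 c2. cycle_in D c1 \<and> cycle_in D c2 \<and> odd (length c1) \<and> odd (length c2)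
              \<and> cycle_edges c1 \<inter> cycle_edges c2 = {})"

lemma has_even_or_disjoint_odd_cycles_mono:
  "D \<subseteq> D' \<Longrightarrow> has_even_or_disjoint_odd_cycles D \<Longrightarrow> has_even_or_disjoint_odd_cycles D'"
  unfolding has_even_or_disjoint_odd_cycles_def using cycle_in_mono by metis

lemma has_even_or_disjoint_odd_cycles_if_even_degrees:
  assumes "finite D" "\<forall>e\<in>D. card e = 2" "D \<noteq> {}" "even (card D)" "even_degrees D"
  shows "has_even_or_disjoint_odd_cycles D"
proof -
  obtain c1 where c1: "cycle_in D c1"
    using cycle_in_if_even_degrees[OF assms(1,2,3,5)] by blast
  show ?thesis
  proof (cases "even (length c1)")
    case True
    then show ?thesis
      using c1 unfolding has_even_or_disjoint_odd_cycles_def by blast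
  next
    case False
    let ?C1 = "cycle_edges c1"
    have C1: "?C1 \<subseteq> D" "card ?C1 = length c1" "even_degrees ?C1"
      using c1 card_cycle_edges even_degrees_cycle_edges unfolding cycle_in_def by auto
    then have finite_C1: "finite ?C1"
      using assms(1) finite_subset by blast
    have D_minus_C1: "D - ?C1 = sym_diff D ?C1"
      using C1(1) by blast
    then have "odd (card (D - ?C1))"
      using even_card_sym_diff_iff[OF assms(1) finite_C1] assms(4) C1(2) False by simp
    moreover have "even_degrees (D - ?C1)"
      using D_minus_C1 even_degrees_sym_diff[OF assms(1) finite_C1 assms(5) C1(3)] by simp
    ultimately obtain c2 where c2: "cycle_in (D - ?C1) c2"
      using cycle_in_if_even_degrees[of "D - ?C1"] assms(1,2) by fastforce
    then have "cycle_in D c2" "cycle_edges c2 \<inter> ?C1 = {}"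
      using cycle_in_mono[of "D - ?C1" D] unfolding cycle_in_def by auto
    then show ?thesis
      using c1 False unfolding has_even_or_disjoint_odd_cycles_def by blast
  qed
qed

lemma has_even_or_disjoint_odd_cycles_if_two_cycles:
  assumes "finite E" "\<forall>e\<in>E. card e = 2" "cycle_in E c" "cycle_in E c'"
    and "cycle_edges c \<noteq> cycle_edges c'"
  shows "has_even_or_disjoint_odd_cycles E"
proof (cases "even (length c) \<or> even (length c')")
  case True
  then show ?thesis
    using assms(3,4) unfolding has_even_or_disjoint_odd_cycles_def by blast
next
  case False
  let ?C = "cycle_edges c" and ?C' = "cycle_edges c'"
  let ?D = "sym_diff ?C ?C'"
  have C: "?C \<subseteq> E" "card ?C = length c" "even_degrees ?C"
    using assms(3) card_cycle_edges even_degrees_cycle_edges unfolding cycle_in_def by auto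
  have C': "?C' \<subseteq> E" "card ?C' = length c'" "even_degrees ?C'"
    using assms(4) card_cycle_edges even_degrees_cycle_edges unfolding cycle_in_def by auto
  have finite: "finite ?C" "finite ?C'"
    using C(1) C'(1) assms(1) finite_subset by blast+
  have "?D \<subseteq> E" "?D \<noteq> {}"
    using C(1) C'(1) assms(5) by blast+
  moreover have "even (card ?D)"
    using even_card_sym_diff_iff[OF finite] C(2) C'(2) False by simp
  moreover have "even_degrees ?D"
    using even_degrees_sym_diff[OF finite C(3) C'(3)] .
  ultimately show ?thesis
    using has_even_or_disjoint_odd_cycles_if_even_degrees[of ?D] assms(1,2)
      has_even_or_disjoint_odd_cycles_mono[of ?D E] finite_subset by blast
qed

theorem corollary8p4:
  fixes V :: "'a set" and E :: "'a set set"
  assumes "simple_graph V E"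
    and "card V \<ge> 4"
    and "card E \<ge> card V + 1"
  shows "(\<exists>c. is_cycle V E c \<and> even (length c)) \<or>
         (\<exists>c1 c2. is_cycle V E c1 \<and> is_cycle V E c2 \<and> odd (length c1) \<and> odd (length c2)
                  \<and> cycle_edges c1 \<inter> cycle_edges c2 = {})"
proof -
  have "finite V" "\<Union>E \<subseteq> V" and edges_card_2: "\<forall>e\<in>E. card e = 2"
    using assms(1) unfolding simple_graph_def by auto
  then have "finite E" and card_Union: "card (\<Union>E) \<le> card V"
    by (simp_all add: card_mono finite_UnionD finite_subset)
  then obtain c where c: "cycle_in E c"
    using cycle_in_if_card_Union_le[OF _ edges_card_2] assms(2,3) by fastforce
  moreover have "cycle_edges c \<noteq> {}"
    using c card_cycle_edges[of c] unfolding cycle_in_def by auto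
  ultimately obtain e where e: "e \<in> cycle_edges c" "e \<in> E"
    unfolding cycle_in_def by blast
  have "card (\<Union>(E - {e})) \<le> card V"
    using \<open>finite V\<close> \<open>\<Union>E \<subseteq> V\<close> by (meson Diff_subset Union_mono card_mono order_trans)
  moreover have "card (E - {e}) = card E - 1"
    using e(2) \<open>finite E\<close> by simp
  ultimately have "card (\<Union>(E - {e})) \<le> card (E - {e})" "E - {e} \<noteq> {}"
    using assms(2,3) by (linarith, fastforce)
  then obtain c' where "cycle_in (E - {e}) c'"
    using cycle_in_if_card_Union_le[of "E - {e}"] \<open>finite E\<close> edges_card_2 by blast
  then have "cycle_in E c'" "e \<notin> cycle_edges c'"
    using cycle_in_mono[of "E - {e}" E] unfolding cycle_in_def by auto
  then have "has_even_or_disjoint_odd_cycles E"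
    using has_even_or_disjoint_odd_cycles_if_two_cycles[OF \<open>finite E\<close> edges_card_2 c] e(1) by blast
  then show ?thesis
    unfolding has_even_or_disjoint_odd_cycles_def is_cycle_iff_cycle_in[OF \<open>\<Union>E \<subseteq> V\<close>] .
qed

end
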